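(* Let $q$ be a power of $2$, let $a,b\in\mathbb{F}_q$ with $b\ne0$, and let $n\ge2$ be an integer with $\gcd(n+1,q)=1$. Then $n$ is even, and $\hat C_n(a,b)$ is LCD if and only if $$a/b\notin\{-1/b+\theta^i+\theta^{-i} : 1\le i\le n/2\},$$ where $\theta\in\overline{\mathbb{F}}_q$ is a primitive $(n+1)$-th root of unity.
   Context: For $a,b\in\mathbb{F}_q$ and $n\ge 2$, $\hat T_n(a,b)$ denotes the $n\times n$ symmetric tridiagonal Toeplitz matrix over $\mathbb{F}_q$ with all diagonal entries equal to $a$, all entries on the first super- and sub-diagonals equal to $b$, and all other entries $0$. $\hat C_n(a,b)$ is the $[2n,n]$ linear code over $\mathbb{F}_q$ with generator matrix $[I_n\mid \hat T_n(a,b)]$. A linear code $C$ is LCD if $C\cap C^\perp=\{0\}$ (Euclidean dual). *)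

theory Defs
  imports "HOL-Algebra.Algebraic_Closure_Type"
begin

text \<open>Vectors of length m over a field are functions nat => 'a vanishing from index m on.\<close>
definition fvecs :: "nat \<Rightarrow> (nat \<Rightarrow> 'a::zero) set" where
  "fvecs m = {x. \<forall>j\<ge>m. x j = 0}"

text \<open>The n x n symmetric tridiagonal Toeplitz matrix T_n(a,b) (entries indexed from 0).\<close>
definition tridiag_toeplitz :: "nat \<Rightarrow> 'a::zero \<Rightarrow> 'a \<Rightarrow> nat \<Rightarrow> nat \<Rightarrow> 'a" where
  "tridiag_toeplitz n a b i j =
     (if i < n \<and> j < n then
        (if i = j then a else if i = j + 1 \<or> j = i + 1 then b else 0)
      else 0)"

text \<open>Generator matrix [I_n | T_n(a,b)], an n x 2n matrix.\<close>
definition gen_matrix :: "nat \<Rightarrow> 'a::{zero,one} \<Rightarrow> 'a \<Rightarrow> nat \<Rightarrow> nat \<Rightarrow> 'a" where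
  "gen_matrix n a b i j =
     (if i < n \<and> j < n then (if i = j then 1 else 0)
      else if i < n \<and> n \<le> j \<and> j < 2 * n then tridiag_toeplitz n a b i (j - n)
      else 0)"

definition row_code :: "nat \<Rightarrow> nat \<Rightarrow> (nat \<Rightarrow> nat \<Rightarrow> 'a::comm_ring_1) \<Rightarrow> (nat \<Rightarrow> 'a) set" where
  "row_code k m G = {x \<in> fvecs m. \<exists>u. \<forall>j<m. x j = (\<Sum>i<k. u i * G i j)}"

definition toeplitz_code :: "nat \<Rightarrow> 'a::comm_ring_1 \<Rightarrow> 'a \<Rightarrow> (nat \<Rightarrow> 'a) set" where
  "toeplitz_code n a b = row_code n (2 * n) (gen_matrix n a b)"

definition euclid_dual :: "nat \<Rightarrow> (nat \<Rightarrow> 'a::comm_ring_1) set \<Rightarrow> (nat \<Rightarrow> 'a) set" where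
  "euclid_dual m C = {y \<in> fvecs m. \<forall>x\<in>C. (\<Sum>j<m. x j * y j) = 0}"

definition is_LCD :: "nat \<Rightarrow> (nat \<Rightarrow> 'a::comm_ring_1) set \<Rightarrow> bool" where
  "is_LCD m C \<longleftrightarrow> C \<inter> euclid_dual m C = {(\<lambda>_. 0)}"

definition primitive_root_of_unity :: "nat \<Rightarrow> 'a::comm_ring_1 \<Rightarrow> bool" where
  "primitive_root_of_unity k \<theta> \<longleftrightarrow> \<theta> ^ k = 1 \<and> (\<forall>j. 0 < j \<and> j < k \<longrightarrow> \<theta> ^ j \<noteq> 1)"

end

theory Submission
  imports Defs "HOL-Number_Theory.Residues"
begin

(* Writing T = T_n(a,b), the code consists of the words (u, u T), and since T is symmetric the
   inner product of (u, u T) with (v, v T) is u (I + T^2) v^t. Hence the code is LCD iff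
   I + T^2 is nonsingular. In characteristic 2 we have I + T^2 = (I + T)^2 = T_n(a+1,b)^2, and a
   tridiagonal Toeplitz matrix T_n(c,b) with b \<noteq> 0 is singular iff U_(n+1)(-c/b) = 0, where
   U is the Lucas sequence U_0 = 0, U_1 = 1, U_(k+2) = t U_(k+1) - U_k. Since
   U_k(x + 1/x) (x - 1/x) = x^k - x^(-k), the roots of U_(n+1) are exactly the values
   \<theta>^i + \<theta>^(-i), 1 \<le> i \<le> n/2. *)

section \<open>Characteristic two\<close>

lemma CHAR_eq_if_card_eq_prime_power:
  assumes "prime p" and "card (UNIV :: 'a::{finite,field} set) = p ^ m"
  shows "CHAR('a) = p"
proof -
  have "prime CHAR('a)"
    by (intro prime_CHAR_semidom finite_imp_CHAR_pos) simp
  moreover have "CHAR('a) dvd p ^ m"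
    using CHAR_dvd_CARD[where 'a='a] assms(2) by simp
  ultimately have "CHAR('a) dvd p"
    using prime_dvd_power by blast
  with \<open>prime CHAR('a)\<close> show ?thesis
    using assms(1) primes_dvd_imp_eq by blast
qed

lemma two_eq_zero_if_CHAR_2: "CHAR('a::semiring_1) = 2 \<Longrightarrow> (2::'a) = 0"
  by (metis of_nat_CHAR of_nat_numeral)

lemma eq_1_if_square_eq_1_CHAR_2:
  fixes z :: "'a::idom"
  assumes "CHAR('a) = 2" and "z * z = 1"
  shows "z = 1"
proof -
  have "(z - 1) * (z - 1) = z * z - 2 * z + 1"
    by (simp add: algebra_simps mult_2)
  also have "\<dots> = 0"
    using assms by (simp add: two_eq_zero_if_CHAR_2)
  finally show ?thesis
    by simp
qed

lemma even_if_gcd_Suc_card_eq_1_CHAR_2: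
  assumes "CHAR('a::{finite,field}) = 2" and "gcd (n + 1) (card (UNIV :: 'a set)) = 1"
  shows "even n"
proof (rule ccontr)
  assume "odd n"
  then have "2 dvd gcd (n + 1) (card (UNIV :: 'a set))"
    using assms(1) CHAR_dvd_CARD[where 'a='a] by simp
  with assms(2) show False
    by simp
qed

definition mat_vec :: "nat \<Rightarrow> (nat \<Rightarrow> nat \<Rightarrow> 'a::comm_ring_1) \<Rightarrow> (nat \<Rightarrow> 'a) \<Rightarrow> nat \<Rightarrow> 'a" where
  "mat_vec n M v i = (\<Sum>l<n. M i l * v l)"

definition trivial_kernel :: "nat \<Rightarrow> ((nat \<Rightarrow> 'a::zero) \<Rightarrow> nat \<Rightarrow> 'a) \<Rightarrow> bool" where
  "trivial_kernel n f \<longleftrightarrow> (\<forall>v\<in>fvecs n. (\<forall>i<n. f v i = 0) \<longrightarrow> (\<forall>i<n. v i = 0))"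

lemma mat_vec_cong: "(\<And>l. l < n \<Longrightarrow> v l = w l) \<Longrightarrow> mat_vec n M v i = mat_vec n M w i"
  unfolding mat_vec_def by (intro sum.cong) auto

lemma mat_vec_add: "mat_vec n M (\<lambda>l. v l + w l) i = mat_vec n M v i + mat_vec n M w i"
  unfolding mat_vec_def by (simp add: distrib_left sum.distrib)

lemma mat_vec_in_fvecs: "(\<And>i l. n \<le> i \<Longrightarrow> M i l = 0) \<Longrightarrow> mat_vec n M v \<in> fvecs n"
  unfolding fvecs_def mat_vec_def by auto

lemma sum_lessThan_add:
  fixes m n :: nat
  shows "(\<Sum>j<m + n. f j) = (\<Sum>j<m. f j) + (\<Sum>k<n. f (m + k))"
  by (induction n) (simp_all add: add_ac)

lemma inner_mat_vec_symmetric: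
  assumes "\<And>i l. M i l = M l i"
  shows "(\<Sum>k<n. mat_vec n M u k * w k) = (\<Sum>i<n. u i * mat_vec n M w i)"
proof -
  have "(\<Sum>k<n. mat_vec n M u k * w k) = (\<Sum>k<n. \<Sum>i<n. M k i * u i * w k)"
    unfolding mat_vec_def by (simp add: sum_distrib_right)
  also have "\<dots> = (\<Sum>i<n. \<Sum>k<n. M k i * u i * w k)"
    by (rule sum.swap)
  also have "\<dots> = (\<Sum>i<n. u i * mat_vec n M w i)"
    unfolding mat_vec_def by (simp add: sum_distrib_left assms mult_ac)
  finally show ?thesis .
qed

lemma all_forms_vanish_iff:
  fixes w :: "nat \<Rightarrow> 'a::comm_ring_1"
  shows "(\<forall>u\<in>fvecs n. (\<Sum>i<n. u i * w i) = 0) \<longleftrightarrow> (\<forall>i<n. w i = 0)"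
proof (intro iffI allI impI)
  fix i assume forms: "\<forall>u\<in>fvecs n. (\<Sum>i<n. u i * w i) = 0" and "i < n"
  then have "(\<lambda>j. of_bool (j = i)) \<in> fvecs n"
    by (auto simp: fvecs_def)
  from bspec[OF forms this] have "(\<Sum>j<n. of_bool (j = i) * w j) = 0"
    by simp
  with \<open>i < n\<close> show "w i = 0"
    by simp
qed simp

lemma trivial_kernel_mat_vec_square:
  assumes "\<And>i l. n \<le> i \<Longrightarrow> M i l = 0"
  shows "trivial_kernel n (\<lambda>v. mat_vec n M (mat_vec n M v)) \<longleftrightarrow> trivial_kernel n (mat_vec n M)"
  unfolding trivial_kernel_def
proof (intro iffI ballI impI)
  fix v assume square: "\<forall>v\<in>fvecs n. (\<forall>i<n. mat_vec n M (mat_vec n M v) i = 0) \<longrightarrow> (\<forall>i<n. v i = 0)"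
    and "v \<in> fvecs n" and "\<forall>i<n. mat_vec n M v i = 0"
  then have "mat_vec n M (mat_vec n M v) i = mat_vec n M (\<lambda>_. 0) i" for i
    by (intro mat_vec_cong) simp
  then have "\<forall>i<n. mat_vec n M (mat_vec n M v) i = 0"
    by (simp add: mat_vec_def)
  with square \<open>v \<in> fvecs n\<close> show "\<forall>i<n. v i = 0"
    by blast
next
  fix v assume "\<forall>v\<in>fvecs n. (\<forall>i<n. mat_vec n M v i = 0) \<longrightarrow> (\<forall>i<n. v i = 0)"
    and "v \<in> fvecs n" and "\<forall>i<n. mat_vec n M (mat_vec n M v) i = 0"
  moreover have "mat_vec n M v \<in> fvecs n"
    using assms by (rule mat_vec_in_fvecs)
  ultimately show "\<forall>i<n. v i = 0"
    by blast
qed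

lemma tridiag_toeplitz_sym: "tridiag_toeplitz n a b i l = tridiag_toeplitz n a b l i"
  unfolding tridiag_toeplitz_def by auto

lemma tridiag_toeplitz_eq_0: "n \<le> i \<Longrightarrow> tridiag_toeplitz n a b i l = 0"
  unfolding tridiag_toeplitz_def by auto

lemma mat_vec_tridiag_toeplitz:
  fixes c b :: "'a::comm_ring_1"
  assumes w: "w \<in> fvecs n" and i: "i < n"
  shows "mat_vec n (tridiag_toeplitz n c b) w i =
    c * w i + b * (if 0 < i then w (i - 1) else 0) + b * w (i + 1)"
proof -
  have "mat_vec n (tridiag_toeplitz n c b) w i =
    (\<Sum>l<n. (if l = i then c * w l else 0) + (if 0 < i \<and> l = i - 1 then b * w l else 0)
      + (if l = i + 1 then b * w l else 0))"
    unfolding mat_vec_def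
    by (intro sum.cong) (use i in \<open>auto simp: tridiag_toeplitz_def\<close>)
  also have "\<dots> = c * w i + b * (if 0 < i then w (i - 1) else 0) + b * w (i + 1)"
    using i w by (auto simp: sum.distrib fvecs_def)
  finally show ?thesis .
qed

lemma mat_vec_tridiag_toeplitz_add_1:
  fixes a b :: "'a::comm_ring_1"
  assumes "i < n"
  shows "mat_vec n (tridiag_toeplitz n (a + 1) b) w i = w i + mat_vec n (tridiag_toeplitz n a b) w i"
proof -
  have "mat_vec n (tridiag_toeplitz n (a + 1) b) w i =
    (\<Sum>l<n. (if l = i then w l else 0) + tridiag_toeplitz n a b i l * w l)"
    unfolding mat_vec_def
    by (intro sum.cong) (use assms in \<open>auto simp: tridiag_toeplitz_def distrib_right\<close>)
  then show ?thesis
    using assms by (simp add: sum.distrib mat_vec_def)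
qed

lemma mat_vec_tridiag_toeplitz_add_1_square:
  fixes a b :: "'a::comm_ring_1" and n :: nat
  assumes "CHAR('a) = 2" and "i < n"
  defines "A \<equiv> tridiag_toeplitz n (a + 1) b" and "T \<equiv> tridiag_toeplitz n a b"
  shows "mat_vec n A (mat_vec n A v) i = v i + mat_vec n T (mat_vec n T v) i"
proof -
  let ?X = "mat_vec n T v i" and ?Y = "mat_vec n T (mat_vec n T v) i"
  have "mat_vec n A (mat_vec n A v) i = mat_vec n A v i + mat_vec n T (mat_vec n A v) i"
    unfolding A_def T_def using assms(2) by (rule mat_vec_tridiag_toeplitz_add_1)
  also have "mat_vec n A v i = v i + ?X"
    unfolding A_def T_def using assms(2) by (rule mat_vec_tridiag_toeplitz_add_1)
  also have "mat_vec n T (mat_vec n A v) i = mat_vec n T (\<lambda>l. v l + mat_vec n T v l) i"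
    unfolding A_def T_def by (intro mat_vec_cong mat_vec_tridiag_toeplitz_add_1)
  also have "\<dots> = ?X + ?Y"
    by (rule mat_vec_add)
  also have "v i + ?X + (?X + ?Y) = v i + (?X + ?X) + ?Y"
    by (simp only: ac_simps)
  also have "?X + ?X = 0"
    using uminus_CHAR_2[OF assms(1), of ?X] by (metis add.right_inverse)
  finally show ?thesis
    by simp
qed

section \<open>The Lucas sequence \<open>U\<close>\<close>

fun lucas_U :: "'a::comm_ring_1 \<Rightarrow> nat \<Rightarrow> 'a" where
  "lucas_U t 0 = 0"
| "lucas_U t (Suc 0) = 1"
| "lucas_U t (Suc (Suc k)) = t * lucas_U t (Suc k) - lucas_U t k"

lemma to_ac_lucas_U: "to_ac (lucas_U t k) = lucas_U (to_ac t) k"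
  by (induction t k rule: lucas_U.induct) simp_all

lemma lucas_U_0_odd: "lucas_U (0::'a::comm_ring_1) (Suc (2 * k)) = (-1) ^ k"
  by (induction k) simp_all

lemma lucas_U_add_mult_diff:
  fixes x y :: "'a::comm_ring_1"
  assumes xy: "x * y = 1"
  shows "lucas_U (x + y) k * (x - y) = x ^ k - y ^ k"
proof (induction "x + y" k rule: lucas_U.induct)
  case (3 k)
  have "lucas_U (x + y) (Suc (Suc k)) * (x - y) =
      (x + y) * (lucas_U (x + y) (Suc k) * (x - y)) - lucas_U (x + y) k * (x - y)"
    by (simp add: algebra_simps)
  also have "\<dots> = (x + y) * (x ^ Suc k - y ^ Suc k) - (x ^ k - y ^ k)"
    using 3 by simp
  also have "\<dots> = x ^ Suc (Suc k) - y ^ Suc (Suc k) + (x * y) * (x ^ k - y ^ k) - (x ^ k - y ^ k)"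
    by (simp add: algebra_simps)
  finally show ?case
    using xy by simp
qed simp_all

lemma lucas_U_add_inverse_eq_0_iff:
  fixes x :: "'a::field"
  assumes "x \<noteq> 0" and "x * x \<noteq> 1"
  shows "lucas_U (x + inverse x) k = 0 \<longleftrightarrow> x ^ k * x ^ k = 1"
proof -
  have "x - inverse x \<noteq> 0"
    using assms by (metis right_inverse right_minus_eq)
  then have "lucas_U (x + inverse x) k = 0 \<longleftrightarrow> x ^ k = inverse (x ^ k)"
    using lucas_U_add_mult_diff[of x "inverse x" k] assms(1) by (auto simp: power_inverse)
  also have "\<dots> \<longleftrightarrow> x ^ k * x ^ k = 1"
    using assms(1) by (auto simp: field_simps)
  finally show ?thesis .
qed

section \<open>The code \<open>C\<^sub>n(a,b)\<close> and its Euclidean dual\<close>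

definition toeplitz_codeword :: "nat \<Rightarrow> 'a::comm_ring_1 \<Rightarrow> 'a \<Rightarrow> (nat \<Rightarrow> 'a) \<Rightarrow> nat \<Rightarrow> 'a" where
  "toeplitz_codeword n a b u j =
    (if j < n then u j else if j < 2 * n then mat_vec n (tridiag_toeplitz n a b) u (j - n) else 0)"

lemma toeplitz_codeword_in_fvecs: "toeplitz_codeword n a b u \<in> fvecs (2 * n)"
  unfolding fvecs_def toeplitz_codeword_def by auto

lemma toeplitz_codeword_eq_0_iff: "toeplitz_codeword n a b u = (\<lambda>_. 0) \<longleftrightarrow> (\<forall>i<n. u i = 0)"
  by (auto simp: fun_eq_iff toeplitz_codeword_def mat_vec_def)

lemma toeplitz_codeword_cong:
  "(\<And>i. i < n \<Longrightarrow> u i = u' i) \<Longrightarrow> toeplitz_codeword n a b u = toeplitz_codeword n a b u'"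
  by (auto simp: fun_eq_iff toeplitz_codeword_def intro: mat_vec_cong)

lemma sum_mult_gen_matrix:
  assumes "j < 2 * n"
  shows "(\<Sum>i<n. u i * gen_matrix n a b i j) = toeplitz_codeword n a b u j"
proof (cases "j < n")
  case True
  then have "(\<Sum>i<n. u i * gen_matrix n a b i j) = (\<Sum>i<n. if i = j then u i else 0)"
    by (intro sum.cong) (auto simp: gen_matrix_def)
  with True show ?thesis
    by (simp add: toeplitz_codeword_def)
next
  case False
  then have "(\<Sum>i<n. u i * gen_matrix n a b i j) = (\<Sum>i<n. tridiag_toeplitz n a b (j - n) i * u i)"
    using assms by (intro sum.cong) (auto simp: gen_matrix_def tridiag_toeplitz_sym mult_ac)
  with False assms show ?thesis
    by (simp add: toeplitz_codeword_def mat_vec_def)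
qed

lemma toeplitz_code_eq_image: "toeplitz_code n a b = toeplitz_codeword n a b ` fvecs n"
proof (intro equalityI subsetI)
  fix x assume "x \<in> toeplitz_code n a b"
  then obtain u where x: "x \<in> fvecs (2 * n)" and "\<forall>j<2 * n. x j = toeplitz_codeword n a b u j"
    by (auto simp: toeplitz_code_def row_code_def sum_mult_gen_matrix)
  moreover define u' where "u' i = (if i < n then u i else 0)" for i
  ultimately have "x = toeplitz_codeword n a b u'"
    using toeplitz_codeword_in_fvecs[of n a b u'] toeplitz_codeword_cong[of n u u' a b]
    by (auto simp: fun_eq_iff fvecs_def u'_def) (metis not_le)
  moreover have "u' \<in> fvecs n"
    by (simp add: fvecs_def u'_def)
  ultimately show "x \<in> toeplitz_codeword n a b ` fvecs n"
    by blast
qed (auto simp: toeplitz_code_def row_code_def sum_mult_gen_matrix toeplitz_codeword_in_fvecs)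

lemma inner_toeplitz_codeword:
  fixes a b :: "'a::comm_ring_1" and n :: nat
  defines "T \<equiv> tridiag_toeplitz n a b"
  shows "(\<Sum>j<2 * n. toeplitz_codeword n a b u j * toeplitz_codeword n a b v j) =
    (\<Sum>i<n. u i * (v i + mat_vec n T (mat_vec n T v) i))"
proof -
  let ?c = "toeplitz_codeword n a b"
  have "(\<Sum>j<2 * n. ?c u j * ?c v j) = (\<Sum>j<n. ?c u j * ?c v j) + (\<Sum>k<n. ?c u (n + k) * ?c v (n + k))"
    unfolding mult_2 by (rule sum_lessThan_add)
  also have "(\<Sum>j<n. ?c u j * ?c v j) = (\<Sum>j<n. u j * v j)"
    by (intro sum.cong) (auto simp: toeplitz_codeword_def)
  also have "(\<Sum>k<n. ?c u (n + k) * ?c v (n + k)) = (\<Sum>k<n. mat_vec n T u k * mat_vec n T v k)"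
    by (intro sum.cong) (auto simp: toeplitz_codeword_def T_def)
  also have "\<dots> = (\<Sum>i<n. u i * mat_vec n T (mat_vec n T v) i)"
    unfolding T_def by (intro inner_mat_vec_symmetric tridiag_toeplitz_sym)
  finally show ?thesis
    by (simp add: distrib_left sum.distrib)
qed

lemma is_LCD_toeplitz_code_iff:
  fixes a b :: "'a::comm_ring_1" and n :: nat
  defines "T \<equiv> tridiag_toeplitz n a b"
  shows "is_LCD (2 * n) (toeplitz_code n a b) \<longleftrightarrow>
    trivial_kernel n (\<lambda>v i. v i + mat_vec n T (mat_vec n T v) i)"
proof -
  let ?C = "toeplitz_code n a b" and ?c = "toeplitz_codeword n a b"
  have in_dual_iff:
    "?c v \<in> euclid_dual (2 * n) ?C \<longleftrightarrow> (\<forall>i<n. v i + mat_vec n T (mat_vec n T v) i = 0)" for v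
  proof -
    have "?c v \<in> euclid_dual (2 * n) ?C \<longleftrightarrow> (\<forall>u\<in>fvecs n. (\<Sum>j<2 * n. ?c u j * ?c v j) = 0)"
      unfolding euclid_dual_def toeplitz_code_eq_image
      using toeplitz_codeword_in_fvecs[of n a b v] by (simp only: mem_Collect_eq ball_simps(9) simp_thms)
    also have "\<dots> \<longleftrightarrow> (\<forall>u\<in>fvecs n. (\<Sum>i<n. u i * (v i + mat_vec n T (mat_vec n T v) i)) = 0)"
      unfolding T_def inner_toeplitz_codeword ..
    also have "\<dots> \<longleftrightarrow> (\<forall>i<n. v i + mat_vec n T (mat_vec n T v) i = 0)"
      by (rule all_forms_vanish_iff)
    finally show ?thesis .
  qed
  have "(\<lambda>_. 0) \<in> fvecs n"
    by (simp add: fvecs_def)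
  then have "?c (\<lambda>_. 0) \<in> ?C"
    unfolding toeplitz_code_eq_image by (rule imageI)
  moreover have "?c (\<lambda>_. 0) = (\<lambda>_. 0)"
    by (simp add: toeplitz_codeword_eq_0_iff)
  ultimately have "(\<lambda>_. 0) \<in> ?C"
    by simp
  moreover have "(\<lambda>_. 0) \<in> euclid_dual (2 * n) ?C"
    by (simp add: euclid_dual_def fvecs_def)
  ultimately have "is_LCD (2 * n) ?C \<longleftrightarrow> (\<forall>x\<in>?C. x \<in> euclid_dual (2 * n) ?C \<longrightarrow> x = (\<lambda>_. 0))"
    unfolding is_LCD_def by blast
  also have "\<dots> \<longleftrightarrow> (\<forall>v\<in>fvecs n. ?c v \<in> euclid_dual (2 * n) ?C \<longrightarrow> ?c v = (\<lambda>_. 0))"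
    unfolding toeplitz_code_eq_image by (simp only: ball_simps(9))
  finally show ?thesis
    unfolding in_dual_iff toeplitz_codeword_eq_0_iff trivial_kernel_def .
qed

lemma is_LCD_toeplitz_code_iff_CHAR_2:
  fixes a b :: "'a::comm_ring_1"
  assumes "CHAR('a) = 2"
  shows "is_LCD (2 * n) (toeplitz_code n a b) \<longleftrightarrow>
    trivial_kernel n (mat_vec n (tridiag_toeplitz n (a + 1) b))"
proof -
  let ?A = "tridiag_toeplitz n (a + 1) b" and ?T = "tridiag_toeplitz n a b"
  have "is_LCD (2 * n) (toeplitz_code n a b) \<longleftrightarrow>
      trivial_kernel n (\<lambda>v i. v i + mat_vec n ?T (mat_vec n ?T v) i)"
    by (rule is_LCD_toeplitz_code_iff)
  also have "\<dots> \<longleftrightarrow> trivial_kernel n (\<lambda>v. mat_vec n ?A (mat_vec n ?A v))"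
    unfolding trivial_kernel_def by (simp add: mat_vec_tridiag_toeplitz_add_1_square[OF assms])
  also have "\<dots> \<longleftrightarrow> trivial_kernel n (mat_vec n ?A)"
    by (intro trivial_kernel_mat_vec_square tridiag_toeplitz_eq_0)
  finally show ?thesis .
qed

section \<open>Singularity of tridiagonal Toeplitz matrices\<close>

text \<open>A kernel vector of \<open>T\<^sub>n(c,b)\<close> satisfies the recurrence of \<open>U\<close> at \<open>t = -c/b\<close>,
  so it is \<open>w\<^sub>k = w\<^sub>0 U\<^sub>k\<^sub>+\<^sub>1(t)\<close>; the boundary condition \<open>w\<^sub>n = 0\<close> is \<open>w\<^sub>0 U\<^sub>n\<^sub>+\<^sub>1(t) = 0\<close>.\<close>

lemma tridiag_toeplitz_kernel_vector:
  fixes c b :: "'a::field"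
  assumes "b \<noteq> 0" and w: "w \<in> fvecs n"
    and kernel: "\<forall>i<n. mat_vec n (tridiag_toeplitz n c b) w i = 0" and "k \<le> n"
  shows "w k = w 0 * lucas_U (- c / b) (k + 1)"
  using \<open>k \<le> n\<close>
proof (induction k rule: less_induct)
  case (less k)
  define t where "t = - c / b"
  have c: "c = - (b * t)"
    using assms(1) by (simp add: t_def)
  have IH: "w j = w 0 * lucas_U t (j + 1)" if "j < k" for j
    using less.IH[of j] less.prems that unfolding t_def by simp
  show ?case
    unfolding t_def[symmetric]
  proof (cases k)
    case (Suc i)
    define p where "p = (if 0 < i then w (i - 1) else 0)"
    have "i < n"
      using less Suc by simp
    then have "c * w i + b * p + b * w (i + 1) = 0"
      using kernel mat_vec_tridiag_toeplitz[OF w] by (simp add: p_def)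
    moreover have "c * w i + b * p + b * w (i + 1) = b * (w (i + 1) - (t * w i - p))"
      by (simp add: c algebra_simps)
    ultimately have "w (i + 1) = t * w i - p"
      using assms(1) by simp
    moreover have "p = w 0 * lucas_U t i"
    proof (cases i)
      case (Suc j)
      then show ?thesis
        using IH[of j] \<open>k = Suc i\<close> by (simp add: p_def)
    qed (simp add: p_def)
    ultimately show "w k = w 0 * lucas_U t (k + 1)"
      using IH[of i] Suc by (simp add: algebra_simps)
  qed simp
qed

lemma tridiag_toeplitz_kernel_vector_of_root:
  fixes c b :: "'a::field"
  assumes "b \<noteq> 0" and root: "lucas_U (- c / b) (n + 1) = 0" and "i < n"
  defines "w \<equiv> \<lambda>k. if k < n then lucas_U (- c / b) (k + 1) else 0"
  shows "mat_vec n (tridiag_toeplitz n c b) w i = 0"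
proof -
  define t where "t = - c / b"
  have c: "c = - (b * t)"
    using assms(1) by (simp add: t_def)
  have w: "w \<in> fvecs n"
    by (simp add: w_def fvecs_def)
  have "(if 0 < i then w (i - 1) else 0) = lucas_U t i"
    using \<open>i < n\<close> by (cases i) (simp_all add: w_def t_def)
  moreover have "w (i + 1) = t * lucas_U t (i + 1) - lucas_U t i"
  proof (cases "i + 1 < n")
    case False
    with \<open>i < n\<close> have "n = i + 1"
      by simp
    with root show ?thesis
      by (simp add: w_def t_def)
  qed (simp add: w_def t_def)
  moreover have "w i = lucas_U t (i + 1)"
    using \<open>i < n\<close> by (simp add: w_def t_def)
  ultimately have "mat_vec n (tridiag_toeplitz n c b) w i =
      c * lucas_U t (i + 1) + b * lucas_U t i + b * (t * lucas_U t (i + 1) - lucas_U t i)"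
    using mat_vec_tridiag_toeplitz[OF w \<open>i < n\<close>] by simp
  also have "\<dots> = (c + b * t) * lucas_U t (i + 1)"
    by (simp add: algebra_simps)
  finally show ?thesis
    using c by simp
qed

lemma trivial_kernel_tridiag_toeplitz_iff:
  fixes c b :: "'a::field"
  assumes "b \<noteq> 0" and "n \<ge> 1"
  shows "trivial_kernel n (mat_vec n (tridiag_toeplitz n c b)) \<longleftrightarrow> lucas_U (- c / b) (n + 1) \<noteq> 0"
proof
  assume trivial: "trivial_kernel n (mat_vec n (tridiag_toeplitz n c b))"
  show "lucas_U (- c / b) (n + 1) \<noteq> 0"
  proof
    assume "lucas_U (- c / b) (n + 1) = 0"
    define w where "w k = (if k < n then lucas_U (- c / b) (k + 1) else 0)" for k
    have "w \<in> fvecs n"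
      by (simp add: w_def fvecs_def)
    moreover have "\<forall>i<n. mat_vec n (tridiag_toeplitz n c b) w i = 0"
      unfolding w_def using assms(1) \<open>lucas_U (- c / b) (n + 1) = 0\<close>
      by (blast intro: tridiag_toeplitz_kernel_vector_of_root)
    ultimately have "w 0 = 0"
      using trivial assms(2) by (simp add: trivial_kernel_def)
    then show False
      using assms(2) by (simp add: w_def)
  qed
next
  assume nonzero: "lucas_U (- c / b) (n + 1) \<noteq> 0"
  show "trivial_kernel n (mat_vec n (tridiag_toeplitz n c b))"
    unfolding trivial_kernel_def
  proof (intro ballI impI allI)
    fix w i assume w: "w \<in> fvecs n" and kernel: "\<forall>i<n. mat_vec n (tridiag_toeplitz n c b) w i = 0"
      and "i < n"
    have "w n = 0"
      using w by (simp add: fvecs_def)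
    then have "w 0 = 0"
      using tridiag_toeplitz_kernel_vector[OF assms(1) w kernel, of n] nonzero by simp
    then show "w i = 0"
      using tridiag_toeplitz_kernel_vector[OF assms(1) w kernel, of i] \<open>i < n\<close> by simp
  qed
qed

lemma is_LCD_toeplitz_code_iff_lucas_U_CHAR_2:
  fixes a b :: "'a::field"
  assumes char: "CHAR('a) = 2" and "b \<noteq> 0" and "n \<ge> 1"
  shows "is_LCD (2 * n) (toeplitz_code n a b) \<longleftrightarrow> lucas_U (a / b - - 1 / b) (n + 1) \<noteq> 0"
proof -
  have "- (a + 1) / b = (a + 1) / b"
    by (simp only: uminus_CHAR_2[OF char])
  also have "\<dots> = a / b - - 1 / b"
    by (simp add: add_divide_distrib)
  finally have shift: "- (a + 1) / b = a / b - - 1 / b" .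
  have "is_LCD (2 * n) (toeplitz_code n a b) \<longleftrightarrow>
      trivial_kernel n (mat_vec n (tridiag_toeplitz n (a + 1) b))"
    by (rule is_LCD_toeplitz_code_iff_CHAR_2[OF char])
  also have "\<dots> \<longleftrightarrow> lucas_U (- (a + 1) / b) (n + 1) \<noteq> 0"
    using assms(2,3) by (rule trivial_kernel_tridiag_toeplitz_iff)
  finally show ?thesis
    unfolding shift .
qed

section \<open>Roots of \<open>U\<^sub>n\<^sub>+\<^sub>1\<close>\<close>

lemma
  fixes n :: nat
  assumes "0 < n"
  shows finite_roots_of_unity: "finite {u::'a::idom. u ^ n = 1}"
    and card_roots_of_unity_le: "card {u::'a::idom. u ^ n = 1} \<le> n"
proof -
  define p :: "'a poly" where "p = monom 1 n - 1"
  have roots: "{u::'a. u ^ n = 1} = {u. poly p u = 0}"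
    by (simp add: p_def poly_monom)
  have "p \<noteq> 0"
  proof
    assume "p = 0"
    then have "poly p 0 = 0"
      by simp
    with \<open>0 < n\<close> show False
      by (simp add: p_def poly_monom zero_power)
  qed
  then show "finite {u::'a. u ^ n = 1}"
    unfolding roots by (rule poly_roots_finite)
  have "card {u::'a. u ^ n = 1} \<le> degree p"
    unfolding roots using \<open>p \<noteq> 0\<close> by (rule card_poly_roots_bound)
  also have "degree p \<le> n"
    unfolding p_def by (intro degree_diff_le) (simp_all add: degree_monom_le)
  finally show "card {u::'a. u ^ n = 1} \<le> n" .
qed

lemma root_of_unity_eq_power_primitive:
  fixes \<theta> x :: "'a::field"
  assumes prim: "primitive_root_of_unity (n + 1) \<theta>" and x: "x ^ (n + 1) = 1"
  shows "\<exists>j<n + 1. x = \<theta> ^ j"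
proof -
  define R where "R = {u::'a. u ^ (n + 1) = 1}"
  have "\<theta> \<noteq> 0"
    using prim by (auto simp: primitive_root_of_unity_def)
  have "inj_on (\<lambda>j. \<theta> ^ j) {..<n + 1}"
  proof (rule linorder_inj_onI')
    fix j k assume "k \<in> {..<n + 1}" "j < k"
    show "\<theta> ^ j \<noteq> \<theta> ^ k"
    proof
      assume "\<theta> ^ j = \<theta> ^ k"
      then have "\<theta> ^ (k - j) = 1"
        using \<open>\<theta> \<noteq> 0\<close> \<open>j < k\<close> by (simp add: power_diff)
      with \<open>j < k\<close> \<open>k \<in> {..<n + 1}\<close> prim show False
        by (auto simp: primitive_root_of_unity_def)
    qed
  qed
  moreover have "(\<lambda>j. \<theta> ^ j) ` {..<n + 1} \<subseteq> R"
  proof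
    fix u assume "u \<in> (\<lambda>j. \<theta> ^ j) ` {..<n + 1}"
    then obtain j where "u = \<theta> ^ j"
      by blast
    then have "u ^ (n + 1) = (\<theta> ^ (n + 1)) ^ j"
      by (simp only: power_mult [symmetric] mult.commute)
    with prim show "u \<in> R"
      by (simp add: R_def primitive_root_of_unity_def)
  qed
  moreover have fin: "finite R"
    using finite_roots_of_unity[of "n + 1"] by (simp add: R_def)
  moreover have "card R \<le> n + 1"
    using card_roots_of_unity_le[of "n + 1"] by (simp add: R_def)
  ultimately have "(\<lambda>j. \<theta> ^ j) ` {..<n + 1} = R"
    using card_mono[OF fin, of "(\<lambda>j. \<theta> ^ j) ` {..<n + 1}"]
    by (intro card_subset_eq) (simp_all add: card_image)
  with x show ?thesis
    by (auto simp: R_def)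
qed

lemma exists_eq_add_inverse:
  fixes y :: "'a::alg_closed_field"
  obtains x where "x \<noteq> 0" and "y = x + inverse x"
proof -
  obtain x where "poly [:1, -y, 1:] x = 0"
    using alg_closed_imp_poly_has_root[of "[:1, -y, 1:]"] by auto
  then have root: "1 + x * (x - y) = 0"
    by simp
  then have "x \<noteq> 0"
    by auto
  moreover from this root have "x * y = x * (x + inverse x)"
    by (simp add: algebra_simps)
  ultimately show thesis
    using that by simp
qed

lemma lucas_U_add_inverse_eq_0_iff_CHAR_2:
  fixes x :: "'a::field"
  assumes char: "CHAR('a) = 2" and "x \<noteq> 0" and "x \<noteq> 1"
  shows "lucas_U (x + inverse x) k = 0 \<longleftrightarrow> x ^ k = 1"
proof -
  have "x * x \<noteq> 1"
    using eq_1_if_square_eq_1_CHAR_2[OF char] assms(3) by blast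
  with assms(2) have "lucas_U (x + inverse x) k = 0 \<longleftrightarrow> x ^ k * x ^ k = 1"
    by (rule lucas_U_add_inverse_eq_0_iff)
  also have "\<dots> \<longleftrightarrow> x ^ k = 1"
    using eq_1_if_square_eq_1_CHAR_2[OF char, of "x ^ k"] by auto
  finally show ?thesis .
qed

lemma add_inverse_root_of_unity_eq_sum_of_powers:
  fixes \<theta> x :: "'a::field"
  assumes prim: "primitive_root_of_unity (n + 1) \<theta>" and "even n"
    and "x ^ (n + 1) = 1" and "x \<noteq> 1"
  shows "\<exists>i. x + inverse x = \<theta> ^ i + inverse \<theta> ^ i \<and> 1 \<le> i \<and> i \<le> n div 2"
proof -
  obtain j where "j < n + 1" and xj: "x = \<theta> ^ j"
    using root_of_unity_eq_power_primitive[OF prim] assms(3) by blast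
  with \<open>x \<noteq> 1\<close> have "0 < j"
    by (cases j) auto
  show ?thesis
  proof (cases "j \<le> n div 2")
    case True
    with \<open>0 < j\<close> show ?thesis
      by (intro exI[of _ j]) (simp add: xj power_inverse)
  next
    case False
    define i where "i = n + 1 - j"
    have "x * \<theta> ^ i = 1"
      using \<open>j < n + 1\<close> prim by (simp add: xj i_def primitive_root_of_unity_def flip: power_add)
    then have "x = inverse (\<theta> ^ i)"
      using inverse_unique[of "\<theta> ^ i" x] by (simp add: mult.commute)
    moreover have "1 \<le> i" "i \<le> n div 2"
      using False \<open>j < n + 1\<close> \<open>even n\<close> by (auto simp: i_def elim!: evenE)
    ultimately show ?thesis
      by (intro exI[of _ i]) (simp add: power_inverse add.commute)
  qed
qed

lemma lucas_U_eq_0_iff_CHAR_2: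
  fixes \<theta> y :: "'a::alg_closed_field"
  assumes char: "CHAR('a) = 2" and prim: "primitive_root_of_unity (n + 1) \<theta>" and "even n"
  shows "lucas_U y (n + 1) = 0 \<longleftrightarrow> (\<exists>i. y = \<theta> ^ i + inverse \<theta> ^ i \<and> 1 \<le> i \<and> i \<le> n div 2)"
proof
  assume root: "lucas_U y (n + 1) = 0"
  obtain x where "x \<noteq> 0" and y: "y = x + inverse x"
    using exists_eq_add_inverse .
  have "x \<noteq> 1"
  proof
    assume "x = 1"
    then have "y = 0"
      using y two_eq_zero_if_CHAR_2[OF char] by simp
    moreover obtain m where "n = 2 * m"
      using \<open>even n\<close> by (rule evenE)
    ultimately have "lucas_U y (n + 1) = (-1) ^ m"
      using lucas_U_0_odd by simp
    with root show False
      by simp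
  qed
  moreover from this root y \<open>x \<noteq> 0\<close> have "x ^ (n + 1) = 1"
    using lucas_U_add_inverse_eq_0_iff_CHAR_2[OF char] by simp
  ultimately show "\<exists>i. y = \<theta> ^ i + inverse \<theta> ^ i \<and> 1 \<le> i \<and> i \<le> n div 2"
    unfolding y using add_inverse_root_of_unity_eq_sum_of_powers[OF prim \<open>even n\<close>] by blast
next
  assume "\<exists>i. y = \<theta> ^ i + inverse \<theta> ^ i \<and> 1 \<le> i \<and> i \<le> n div 2"
  then obtain i where y: "y = \<theta> ^ i + inverse \<theta> ^ i" and "1 \<le> i" "i \<le> n div 2"
    by blast
  have \<theta>: "\<theta> ^ (n + 1) = 1" "\<theta> \<noteq> 0" "\<And>j. 0 < j \<Longrightarrow> j < n + 1 \<Longrightarrow> \<theta> ^ j \<noteq> 1"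
    using prim by (auto simp: primitive_root_of_unity_def)
  with \<open>1 \<le> i\<close> \<open>i \<le> n div 2\<close> have "\<theta> ^ i \<noteq> 1"
    by simp
  moreover have "(\<theta> ^ i) ^ (n + 1) = 1"
    by (metis \<theta>(1) power_mult mult.commute power_one)
  ultimately show "lucas_U y (n + 1) = 0"
    using lucas_U_add_inverse_eq_0_iff_CHAR_2[OF char, of "\<theta> ^ i"] \<theta>(2)
    by (simp add: y power_inverse)
qed

theorem theorem2p6:
  fixes a b :: "'a::{finite,field}" and n :: nat
  assumes "\<exists>m. card (UNIV :: 'a set) = 2 ^ m"
    and "b \<noteq> 0"
    and "n \<ge> 2"
    and "gcd (n + 1) (card (UNIV :: 'a set)) = 1"
  shows "even n \<and>
    (\<forall>\<theta> :: 'a alg_closure. primitive_root_of_unity (n + 1) \<theta> \<longrightarrow>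
      (is_LCD (2 * n) (toeplitz_code n a b) \<longleftrightarrow>
        to_ac (a / b) \<notin> {to_ac (- 1 / b) + \<theta> ^ i + inverse \<theta> ^ i | i. 1 \<le> i \<and> i \<le> n div 2}))"
proof (intro conjI allI impI)
  obtain m where "card (UNIV :: 'a set) = 2 ^ m"
    using assms(1) ..
  then have char: "CHAR('a) = 2"
    by (intro CHAR_eq_if_card_eq_prime_power) simp_all
  then show ev: "even n"
    using assms(4) by (rule even_if_gcd_Suc_card_eq_1_CHAR_2)
  fix \<theta> :: "'a alg_closure" assume prim: "primitive_root_of_unity (n + 1) \<theta>"
  have "is_LCD (2 * n) (toeplitz_code n a b) \<longleftrightarrow>
      lucas_U (to_ac (a / b) - to_ac (- 1 / b)) (n + 1) \<noteq> 0"
    using is_LCD_toeplitz_code_iff_lucas_U_CHAR_2[OF char assms(2)] assms(3)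
    by (simp only: to_ac_diff[symmetric] to_ac_lucas_U[symmetric] to_ac_eq_0_iff)
  also have "\<dots> \<longleftrightarrow>
      \<not> (\<exists>i. to_ac (a / b) - to_ac (- 1 / b) = \<theta> ^ i + inverse \<theta> ^ i \<and> 1 \<le> i \<and> i \<le> n div 2)"
    using char by (simp only: lucas_U_eq_0_iff_CHAR_2[OF _ prim ev] CHAR_alg_closure)
  also have "\<dots> \<longleftrightarrow> to_ac (a / b) \<notin> {to_ac (- 1 / b) + \<theta> ^ i + inverse \<theta> ^ i | i. 1 \<le> i \<and> i \<le> n div 2}"
    by (simp only: diff_eq_eq add.assoc add.commute[of _ "to_ac (- 1 / b)"] mem_Collect_eq)
  finally show "is_LCD (2 * n) (toeplitz_code n a b) \<longleftrightarrow>
      to_ac (a / b) \<notin> {to_ac (- 1 / b) + \<theta> ^ i + inverse \<theta> ^ i | i. 1 \<le> i \<and> i \<le> n div 2}" .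
qed

end
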